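(* Let $U$ be a subgroup of $\mathbf{T}/\{\pm1\}$ with at least three elements. Then $R(U)$ is a subring of $\mathbb{C}$ (closed under addition, negation and multiplication, and containing $0$ and $1$). Moreover, $R(U)$ is exactly the set of finite $\mathbb{Z}$-linear combinations of finite products of complex numbers of the form $$\frac{1-u^2}{1-v^2},$$ where $u,v\in\mathbf{T}$ are representatives of elements of $U$ and $v^2\neq 1$. (The value $u^2$ does not depend on the choice of representative.) Equivalently, setting $V=\{u^2: u\in\mathbf{T} \text{ represents an element of } U\}\subset\mathbf{T}$, $R(U)$ is the set of finite $\mathbb{Z}$-linear combinations of finite products of numbers $\frac{1-a}{1-b}$ with $a,b\in V$, $b\neq 1$.
   Context: Let $\mathbf{T}=\{z\in\mathbb{C}:|z|=1\}$. An angle is an element of the quotient group $\mathbf{T}/\{\pm1\}$; in formulas an angle is represented by either of its two representatives $u\in\mathbf{T}$. For $p\in\mathbb{C}$ and an angle $u$, let $L_u(p)=\{p+ru: r\in\mathbb{R}\}$ (the line through $p$ with direction $u$). For distinct angles $u,v$ and $p,q\in\mathbb{C}$, $I_{u,v}(p,q)$ denotes the unique point of $L_u(p)\cap L_v(q)$. For a subgroup $U$ of $\mathbf{T}/\{\pm1\}$, $R(U)$ denotes the smallest subset of $\mathbb{C}$ that contains $0$ and $1$ and such that $I_{u,v}(p,q)\in R(U)$ whenever $p,q\in R(U)$ and $u,v$ are distinct elements of $U$. *)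

theory Defs
  imports Complex_Main
begin

text \<open>An angle (element of T/{+-1}) is represented by either representative u with |u| = 1.
  A subgroup U of T/{+-1} is represented by its full preimage W in T, i.e. a subgroup of the
  circle group T containing -1.\<close>

definition angle_subgroup :: "complex set \<Rightarrow> bool" where
  "angle_subgroup W \<longleftrightarrow> (\<forall>u\<in>W. norm u = 1) \<and> 1 \<in> W \<and> -1 \<in> W \<and>
     (\<forall>u\<in>W. \<forall>v\<in>W. u * v \<in> W) \<and> (\<forall>u\<in>W. inverse u \<in> W)"

definition same_angle :: "complex \<Rightarrow> complex \<Rightarrow> bool" where
  "same_angle u v \<longleftrightarrow> u = v \<or> u = - v"

definition line :: "complex \<Rightarrow> complex \<Rightarrow> complex set" where
  "line u p = {p + complex_of_real r * u | r. True}"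

definition isect :: "complex \<Rightarrow> complex \<Rightarrow> complex \<Rightarrow> complex \<Rightarrow> complex" where
  "isect u v p q = (THE z. z \<in> line u p \<inter> line v q)"

inductive_set RU :: "complex set \<Rightarrow> complex set" for W :: "complex set" where
  zero: "0 \<in> RU W"
| one: "1 \<in> RU W"
| isect: "\<lbrakk>p \<in> RU W; q \<in> RU W; u \<in> W; v \<in> W; \<not> same_angle u v\<rbrakk>
           \<Longrightarrow> isect u v p q \<in> RU W"

definition is_subring :: "complex set \<Rightarrow> bool" where
  "is_subring S \<longleftrightarrow> 0 \<in> S \<and> 1 \<in> S \<and> (\<forall>x\<in>S. \<forall>y\<in>S. x + y \<in> S) \<and>
     (\<forall>x\<in>S. - x \<in> S) \<and> (\<forall>x\<in>S. \<forall>y\<in>S. x * y \<in> S)"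

definition int_comb_prods :: "complex set \<Rightarrow> complex set" where
  "int_comb_prods G = {z. \<exists>(n::nat) (c::nat \<Rightarrow> int) (m::nat \<Rightarrow> nat) (g::nat \<Rightarrow> nat \<Rightarrow> complex).
       (\<forall>i<n. \<forall>j<m i. g i j \<in> G) \<and> z = (\<Sum>i<n. of_int (c i) * (\<Prod>j<m i. g i j))}"

end

theory Submission
  imports Defs
begin

text \<open>
  Write a = u^2, b = v^2 for the squares of unit direction vectors.  The line through p with
  direction u is the solution set of the equation cnj (z - p) * a = z - p, so the intersection
  of the lines through p and q with directions u, v is p + meet a b (q - p), where
  meet a b d = a * (d - b * cnj d) / (a - b).

  Upper bound: R(U) is contained in the ring generated by the ratios (1 - a) / (1 - b) with
  a, b in V = {u^2 | u in W}.  Every such generator g is a real multiple of a unit in W, hence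
  cnj g = g * y for some y in V; this makes the ring stable under d \<mapsto> (d - x cnj d) / (a - b),
  which is exactly what the intersection formula needs.

  Lower bound: isect commutes with the similarities z \<mapsto> c + r w z (r real, w in W), so R(U) is
  stable under every such map sending 0 and 1 into R(U).  This yields closure under z \<mapsto> 1 - z,
  under multiplication by the generators (each generator is itself an intersection point),
  and, once -1 is known to lie in R(U), under negation and addition.  With three distinct angles
  there is b in V with b, b^2 distinct from 1, and -1 = (-b) (-b) (-b^-2) is a product of
  generators.
\<close>

lemma cnj_unit: "norm u = 1 \<Longrightarrow> cnj u * u = 1"
  using complex_norm_square[of u] by (simp add: mult.commute)

text \<open>For a = u^2, b = v^2, the point p + meet a b (q - p) is where the line through p with
  direction u meets the line through q with direction v (lemma isect_eq).\<close>
definition meet :: "complex \<Rightarrow> complex \<Rightarrow> complex \<Rightarrow> complex" where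
  "meet a b d = a * (d - b * cnj d) / (a - b)"

lemma line_iff:
  assumes u: "norm u = 1"
  shows "z \<in> line u p \<longleftrightarrow> cnj (z - p) * u\<^sup>2 = z - p"
proof
  assume "z \<in> line u p"
  then obtain r where "z = p + complex_of_real r * u" unfolding line_def by blast
  then show "cnj (z - p) * u\<^sup>2 = z - p"
    using cnj_unit[OF u] by (simp add: power2_eq_square mult_ac)
next
  assume eq: "cnj (z - p) * u\<^sup>2 = z - p"
  define x where "x = (z - p) * cnj u"
  have "cnj x = cnj (z - p) * u * (cnj u * u)"
    unfolding x_def using cnj_unit[OF u] by simp
  also have "\<dots> = cnj (z - p) * u\<^sup>2 * cnj u"
    by (simp add: power2_eq_square mult_ac)
  also have "\<dots> = x"
    unfolding eq x_def ..
  finally have "cnj x = x" .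
  then have "x \<in> \<real>" by (simp add: Reals_cnj_iff)
  then obtain r where r: "x = of_real r" by (auto elim: Reals_cases)
  have "z = p + x * u" using cnj_unit[OF u] unfolding x_def by (simp add: mult.assoc)
  then show "z \<in> line u p" unfolding line_def r by blast
qed

lemma meet_iff:
  assumes a: "cnj a * a = 1" and b: "cnj b * b = 1" and ab: "a \<noteq> b"
  shows "(cnj w * a = w \<and> cnj (w - d) * b = w - d) \<longleftrightarrow> w = meet a b d"
proof -
  have a0: "a \<noteq> 0" and b0: "b \<noteq> 0" using a b by auto
  have ca: "cnj a = inverse a" and cb: "cnj b = inverse b"
    using a b by (metis inverse_unique mult.commute)+
  have d: "a - b \<noteq> 0" using ab by simp
  show ?thesis
  proof
    assume "cnj w * a = w \<and> cnj (w - d) * b = w - d"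
    moreover define c where "c = cnj w"
    ultimately have w1: "w = c * a" and w2: "(c - cnj d) * b = w - d" by auto
    have "c * (a - b) = d - b * cnj d"
      using w2 unfolding w1 by (simp add: algebra_simps)
    then have "c = (d - b * cnj d) / (a - b)" using d by (simp add: eq_divide_eq)
    then show "w = meet a b d" unfolding meet_def w1 by simp
  next
    assume w: "w = meet a b d"
    define c where "c = (d - b * cnj d) / (a - b)"
    have wc: "w = c * a" unfolding w meet_def c_def by simp
    have "cnj w = inverse a * (cnj d - inverse b * d) / (inverse a - inverse b)"
      unfolding w meet_def by (simp add: ca cb)
    also have "\<dots> = c"
      unfolding c_def using a0 b0 d by (simp add: field_simps)
    finally have cw: "cnj w = c" .
    have lin: "c * (a - b) = d - b * cnj d" using d unfolding c_def by simp
    have "cnj (w - d) * b = (c - cnj d) * b" using cw by simp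
    also have "\<dots> = w - d" using lin unfolding wc by (simp add: algebra_simps)
    finally show "cnj w * a = w \<and> cnj (w - d) * b = w - d" using cw wc by simp
  qed
qed

lemma same_angle_iff: "same_angle u v \<longleftrightarrow> u\<^sup>2 = v\<^sup>2"
  unfolding same_angle_def by (simp add: power2_eq_iff)

lemma on_both_lines_iff:
  assumes u: "norm u = 1" and v: "norm v = 1" and uv: "\<not> same_angle u v"
  shows "z \<in> line u p \<inter> line v q \<longleftrightarrow> z = p + meet (u\<^sup>2) (v\<^sup>2) (q - p)"
proof -
  have "cnj (u\<^sup>2) * u\<^sup>2 = 1" "cnj (v\<^sup>2) * v\<^sup>2 = 1"
    using cnj_unit[OF u] cnj_unit[OF v] by (simp_all add: power_mult_distrib[symmetric])
  moreover have "u\<^sup>2 \<noteq> v\<^sup>2" using uv by (simp add: same_angle_iff)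
  ultimately have "(cnj (z - p) * u\<^sup>2 = z - p \<and> cnj ((z - p) - (q - p)) * v\<^sup>2 = (z - p) - (q - p))
      \<longleftrightarrow> z - p = meet (u\<^sup>2) (v\<^sup>2) (q - p)"
    by (rule meet_iff)
  moreover have "z - p = meet (u\<^sup>2) (v\<^sup>2) (q - p) \<longleftrightarrow> z = p + meet (u\<^sup>2) (v\<^sup>2) (q - p)"
    by (metis add_diff_cancel_left' diff_add_cancel)
  ultimately show ?thesis by (simp add: line_iff[OF u] line_iff[OF v])
qed

lemma isect_eq:
  assumes "norm u = 1" "norm v = 1" "\<not> same_angle u v"
  shows "isect u v p q = p + meet (u\<^sup>2) (v\<^sup>2) (q - p)"
  unfolding isect_def on_both_lines_iff[OF assms] by simp

lemma isect_on_line: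
  assumes "norm u = 1" "norm v = 1" "\<not> same_angle u v"
  shows "isect u v p q \<in> line u p"
  using on_both_lines_iff[OF assms] isect_eq[OF assms] by blast

lemma meet_rotate_scale:
  assumes w: "norm w = 1"
  shows "meet (w\<^sup>2 * a) (w\<^sup>2 * b) (of_real r * w * d) = of_real r * w * meet a b d"
proof -
  define l where "l = of_real r * w"
  have w0: "w\<^sup>2 \<noteq> 0" using w by auto
  have "w\<^sup>2 * b * cnj (l * d) = l * (b * cnj d)"
    unfolding l_def using cnj_unit[OF w] by (simp add: power2_eq_square mult_ac)
  then have num: "l * d - w\<^sup>2 * b * cnj (l * d) = l * (d - b * cnj d)"
    by (simp add: right_diff_distrib)
  have "meet (w\<^sup>2 * a) (w\<^sup>2 * b) (l * d) = w\<^sup>2 * (a * (l * (d - b * cnj d))) / (w\<^sup>2 * (a - b))"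
    unfolding meet_def num by (simp only: right_diff_distrib mult.assoc)
  also have "\<dots> = l * meet a b d"
    unfolding mult_divide_mult_cancel_left[OF w0] meet_def by (simp add: mult_ac)
  finally show ?thesis unfolding l_def .
qed

lemma isect_similarity:
  assumes "norm u = 1" "norm v = 1" "\<not> same_angle u v" and w: "norm w = 1"
  shows "isect (w * u) (w * v) (c + of_real r * w * p) (c + of_real r * w * q)
       = c + of_real r * w * isect u v p q"
proof -
  have w0: "w \<noteq> 0" using w by auto
  have uv: "u\<^sup>2 \<noteq> v\<^sup>2" using assms(3) by (simp add: same_angle_iff)
  have "\<not> same_angle (w * u) (w * v)" using uv w0 by (simp add: same_angle_iff power_mult_distrib)
  moreover have "norm (w * u) = 1" "norm (w * v) = 1" using assms by (simp_all add: norm_mult)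
  ultimately have "isect (w * u) (w * v) (c + of_real r * w * p) (c + of_real r * w * q)
      = c + of_real r * w * p + meet ((w * u)\<^sup>2) ((w * v)\<^sup>2)
          ((c + of_real r * w * q) - (c + of_real r * w * p))"
    by (simp add: isect_eq)
  also have "\<dots> = c + of_real r * w * p + meet (w\<^sup>2 * u\<^sup>2) (w\<^sup>2 * v\<^sup>2) (of_real r * w * (q - p))"
    by (simp add: power_mult_distrib right_diff_distrib)
  also have "\<dots> = c + of_real r * w * isect u v p q"
    unfolding meet_rotate_scale[OF w] isect_eq[OF assms(1-3)] by (simp add: algebra_simps)
  finally show ?thesis .
qed

inductive_set gen_ring :: "complex set \<Rightarrow> complex set" for G :: "complex set" where
  zero: "0 \<in> gen_ring G"
| one: "1 \<in> gen_ring G"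
| add: "x \<in> gen_ring G \<Longrightarrow> y \<in> gen_ring G \<Longrightarrow> x + y \<in> gen_ring G"
| uminus: "x \<in> gen_ring G \<Longrightarrow> - x \<in> gen_ring G"
| mult_gen: "g \<in> G \<Longrightarrow> x \<in> gen_ring G \<Longrightarrow> g * x \<in> gen_ring G"

lemma gen_ring_mult: "x \<in> gen_ring G \<Longrightarrow> y \<in> gen_ring G \<Longrightarrow> x * y \<in> gen_ring G"
proof (induction x rule: gen_ring.induct)
  case (mult_gen g x)
  then show ?case using gen_ring.mult_gen[of g G "x * y"] by (simp add: mult.assoc)
qed (auto simp: distrib_right intro: gen_ring.intros)

lemma gen_ring_is_subring: "is_subring (gen_ring G)"
  unfolding is_subring_def by (auto intro: gen_ring.intros gen_ring_mult)

lemma gen_ring_of_int: "x \<in> gen_ring G \<Longrightarrow> of_int c * x \<in> gen_ring G"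
proof -
  assume x: "x \<in> gen_ring G"
  have nat: "of_nat n * x \<in> gen_ring G" for n
    by (induction n) (auto simp: distrib_right intro: gen_ring.intros x)
  show ?thesis
  proof (cases "c \<ge> 0")
    case True
    then show ?thesis using nat[of "nat c"] by simp
  next
    case False
    then show ?thesis using gen_ring.uminus[OF nat[of "nat (- c)"]] by simp
  qed
qed

lemma int_comb_prodsI:
  fixes c :: "nat \<Rightarrow> int" and m :: "nat \<Rightarrow> nat" and g :: "nat \<Rightarrow> nat \<Rightarrow> complex"
  assumes "\<forall>i<n. \<forall>j<m i. g i j \<in> G" and "z = (\<Sum>i<n. of_int (c i) * (\<Prod>j<m i. g i j))"
  shows "z \<in> int_comb_prods G"
  using assms unfolding int_comb_prods_def by blast

lemma int_comb_prodsE: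
  assumes "z \<in> int_comb_prods G"
  obtains n and c :: "nat \<Rightarrow> int" and m :: "nat \<Rightarrow> nat" and g :: "nat \<Rightarrow> nat \<Rightarrow> complex"
  where "\<forall>i<n. \<forall>j<m i. g i j \<in> G" and "z = (\<Sum>i<n. of_int (c i) * (\<Prod>j<m i. g i j))"
  using assms unfolding int_comb_prods_def by blast

lemma int_comb_prods_subset: "int_comb_prods G \<subseteq> gen_ring G"
proof
  fix z assume "z \<in> int_comb_prods G"
  then obtain n and c :: "nat \<Rightarrow> int" and m :: "nat \<Rightarrow> nat" and g :: "nat \<Rightarrow> nat \<Rightarrow> complex"
    where g: "\<forall>i<n. \<forall>j<m i. g i j \<in> G" and z: "z = (\<Sum>i<n. of_int (c i) * (\<Prod>j<m i. g i j))"
    by (blast elim: int_comb_prodsE)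
  have prod: "(\<Prod>j<k. g i j) \<in> gen_ring G" if "i < n" "k \<le> m i" for i k
    using that(2)
  proof (induction k)
    case (Suc k)
    have "g i k \<in> G" using g that(1) Suc.prems by simp
    then show ?case using gen_ring.mult_gen Suc by (simp add: mult.commute)
  qed (simp add: gen_ring.one)
  have "(\<Sum>i<k. of_int (c i) * (\<Prod>j<m i. g i j)) \<in> gen_ring G" if "k \<le> n" for k
    using that
  proof (induction k)
    case (Suc k)
    then show ?case using gen_ring.add gen_ring_of_int prod by simp
  qed (simp add: gen_ring.zero)
  then show "z \<in> gen_ring G" using z by simp
qed

lemma int_comb_prods_add_term:
  fixes h :: "nat \<Rightarrow> complex"
  assumes z: "z \<in> int_comb_prods G" and h: "\<forall>j<k. h j \<in> G"
  shows "z + of_int c0 * (\<Prod>j<k. h j) \<in> int_comb_prods G"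
proof -
  obtain n and c :: "nat \<Rightarrow> int" and m :: "nat \<Rightarrow> nat" and g :: "nat \<Rightarrow> nat \<Rightarrow> complex"
    where g: "\<forall>i<n. \<forall>j<m i. g i j \<in> G" and z: "z = (\<Sum>i<n. of_int (c i) * (\<Prod>j<m i. g i j))"
    using z by (blast elim: int_comb_prodsE)
  have "(\<Sum>i<n. of_int ((c(n := c0)) i) * (\<Prod>j<(m(n := k)) i. (g(n := h)) i j))
      = (\<Sum>i<n. of_int (c i) * (\<Prod>j<m i. g i j))"
    by (rule sum.cong) auto
  then show ?thesis
    using g h z by (intro int_comb_prodsI[where n = "Suc n" and c = "c(n := c0)" and m = "m(n := k)"
        and g = "g(n := h)"]) (auto simp: less_Suc_eq)
qed

lemma int_comb_prods_add:
  assumes z: "z \<in> int_comb_prods G" and y: "y \<in> int_comb_prods G"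
  shows "z + y \<in> int_comb_prods G"
proof -
  obtain n and c :: "nat \<Rightarrow> int" and m :: "nat \<Rightarrow> nat" and g :: "nat \<Rightarrow> nat \<Rightarrow> complex"
    where g: "\<forall>i<n. \<forall>j<m i. g i j \<in> G" and y: "y = (\<Sum>i<n. of_int (c i) * (\<Prod>j<m i. g i j))"
    using y by (blast elim: int_comb_prodsE)
  have "z + (\<Sum>i<k. of_int (c i) * (\<Prod>j<m i. g i j)) \<in> int_comb_prods G" if "k \<le> n" for k
    using that
  proof (induction k)
    case (Suc k)
    then have "z + (\<Sum>i<k. of_int (c i) * (\<Prod>j<m i. g i j)) + of_int (c k) * (\<Prod>j<m k. g k j)
        \<in> int_comb_prods G"
      using g by (intro int_comb_prods_add_term) auto
    then show ?case by (simp add: add.assoc)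
  qed (simp add: z)
  then show ?thesis using y by simp
qed

lemma int_comb_prods_uminus:
  assumes "z \<in> int_comb_prods G"
  shows "- z \<in> int_comb_prods G"
proof -
  obtain n and c :: "nat \<Rightarrow> int" and m :: "nat \<Rightarrow> nat" and g :: "nat \<Rightarrow> nat \<Rightarrow> complex"
    where g: "\<forall>i<n. \<forall>j<m i. g i j \<in> G" and z: "z = (\<Sum>i<n. of_int (c i) * (\<Prod>j<m i. g i j))"
    using assms by (blast elim: int_comb_prodsE)
  show ?thesis
    using g z by (intro int_comb_prodsI[where c = "\<lambda>i. - c i"]) (auto simp: sum_negf[symmetric])
qed

lemma int_comb_prods_mult_gen:
  assumes z: "z \<in> int_comb_prods G" and h: "h \<in> G"
  shows "h * z \<in> int_comb_prods G"
proof -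
  obtain n and c :: "nat \<Rightarrow> int" and m :: "nat \<Rightarrow> nat" and g :: "nat \<Rightarrow> nat \<Rightarrow> complex"
    where g: "\<forall>i<n. \<forall>j<m i. g i j \<in> G" and z: "z = (\<Sum>i<n. of_int (c i) * (\<Prod>j<m i. g i j))"
    using z by (blast elim: int_comb_prodsE)
  define g' where "g' i j = (if j < m i then g i j else h)" for i j
  have "(\<Prod>j<Suc (m i). g' i j) = h * (\<Prod>j<m i. g i j)" for i
    by (simp add: g'_def mult.commute)
  then show ?thesis
    using g h z by (intro int_comb_prodsI[where m = "\<lambda>i. Suc (m i)" and g = g' and c = c])
      (auto simp: g'_def less_Suc_eq sum_distrib_left mult_ac)
qed

lemma int_comb_prods_eq_gen_ring: "int_comb_prods G = gen_ring G"
proof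
  show "gen_ring G \<subseteq> int_comb_prods G"
  proof
    fix x assume "x \<in> gen_ring G"
    then show "x \<in> int_comb_prods G"
    proof (induction rule: gen_ring.induct)
      case zero
      show ?case by (rule int_comb_prodsI[where n = 0]) auto
    next
      case one
      show ?case by (rule int_comb_prodsI[where n = 1 and m = "\<lambda>_. 0" and c = "\<lambda>_. 1"]) auto
    qed (auto intro: int_comb_prods_add int_comb_prods_uminus int_comb_prods_mult_gen)
  qed
qed (rule int_comb_prods_subset)

definition ratios :: "complex set \<Rightarrow> complex set" where
  "ratios W = {(1 - a) / (1 - b) | a b. a \<in> (\<lambda>u. u\<^sup>2) ` W \<and> b \<in> (\<lambda>u. u\<^sup>2) ` W \<and> b \<noteq> 1}"

context
  fixes W :: "complex set"
  assumes W: "angle_subgroup W"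
begin

lemma W_norm: "u \<in> W \<Longrightarrow> norm u = 1"
  and W_one: "1 \<in> W"
  and W_mult: "u \<in> W \<Longrightarrow> v \<in> W \<Longrightarrow> u * v \<in> W"
  and W_inverse: "u \<in> W \<Longrightarrow> inverse u \<in> W"
  using W unfolding angle_subgroup_def by auto

text \<open>R(U) is stable under a similarity z \<mapsto> c + r w z (w in W) as soon as the images of 0 and 1
  lie in R(U): the defining intersections are transported to intersections.\<close>
lemma RU_similarity:
  assumes w: "w \<in> W" and c: "c \<in> RU W" and cl: "c + of_real r * w \<in> RU W"
    and z: "z \<in> RU W"
  shows "c + of_real r * w * z \<in> RU W"
  using z
proof (induction rule: RU.induct)
  case zero
  then show ?case using c by simp
next
  case one
  then show ?case using cl by simp
next
  case (isect p q u v)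
  have "\<not> same_angle (w * u) (w * v)"
    using isect.hyps W_norm[OF w] by (auto simp: same_angle_iff power_mult_distrib)
  then have "isect (w * u) (w * v) (c + of_real r * w * p) (c + of_real r * w * q) \<in> RU W"
    using isect.IH W_mult[OF w] isect.hyps by (blast intro: RU.isect)
  then show ?case
    using isect_similarity[OF W_norm W_norm _ W_norm[OF w]] isect.hyps by simp
qed

text \<open>Real multiples of elements of W: multiplication by them is a similarity of the above kind.\<close>
definition scaled_unit :: "complex \<Rightarrow> bool" where
  "scaled_unit l \<longleftrightarrow> (\<exists>r. \<exists>w\<in>W. l = of_real r * w)"

lemma RU_one_minus: "z \<in> RU W \<Longrightarrow> 1 - z \<in> RU W"
  using RU_similarity[OF W_one RU.one, of "-1"] RU.zero by simp

lemma RU_scale: "l \<in> RU W \<Longrightarrow> scaled_unit l \<Longrightarrow> z \<in> RU W \<Longrightarrow> l * z \<in> RU W"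
  unfolding scaled_unit_def using RU_similarity[OF _ RU.zero] by fastforce

lemma RU_uminus: "-1 \<in> RU W \<Longrightarrow> z \<in> RU W \<Longrightarrow> - z \<in> RU W"
  using RU_scale[of "-1"] W_one unfolding scaled_unit_def by (metis mult_minus1 of_real_1 of_real_minus)

lemma RU_add:
  assumes m1: "-1 \<in> RU W" and t: "t \<in> RU W" and z: "z \<in> RU W"
  shows "t + z \<in> RU W"
proof -
  have "t + 1 \<in> RU W" using RU_one_minus[OF RU_uminus[OF m1 t]] by (simp add: add.commute)
  then show ?thesis using RU_similarity[OF W_one t, of 1 z] z by simp
qed

abbreviation V :: "complex set" where
  "V \<equiv> (\<lambda>u. u\<^sup>2) ` W"

lemma V_unit: "a \<in> V \<Longrightarrow> cnj a * a = 1"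
  using cnj_unit W_norm by (auto simp: power_mult_distrib[symmetric])

lemma V_mult: "a \<in> V \<Longrightarrow> b \<in> V \<Longrightarrow> a * b \<in> V"
  using W_mult by (auto simp: power_mult_distrib[symmetric])

lemma V_inverse: "a \<in> V \<Longrightarrow> inverse a \<in> V"
  using W_inverse by (auto simp: power_inverse[symmetric])

text \<open>Each generator (1 - s^2) / (1 - t^2) is the intersection of the line through 0 with direction
  s / t and the line through 1 with direction s; in particular it is a real multiple of s / t.\<close>
lemma ratios_in_RU:
  assumes "g \<in> ratios W"
  shows "g \<in> RU W" and "scaled_unit g"
proof -
  obtain \<sigma> \<tau> where \<sigma>: "\<sigma> \<in> W" and \<tau>: "\<tau> \<in> W" and \<tau>1: "\<tau>\<^sup>2 \<noteq> 1"
    and g: "g = (1 - \<sigma>\<^sup>2) / (1 - \<tau>\<^sup>2)"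
    using assms unfolding ratios_def by blast
  have \<sigma>0: "\<sigma> \<noteq> 0" and \<tau>0: "\<tau> \<noteq> 0" using W_norm[OF \<sigma>] W_norm[OF \<tau>] by auto
  define w where "w = \<sigma> * inverse \<tau>"
  have w: "w \<in> W" unfolding w_def using W_mult W_inverse \<sigma> \<tau> by blast
  have w2: "w\<^sup>2 = \<sigma>\<^sup>2 / \<tau>\<^sup>2" unfolding w_def by (simp add: power_mult_distrib power_inverse divide_inverse)
  have "\<not> same_angle w \<sigma>"
    using \<tau>1 \<sigma>0 \<tau>0 unfolding same_angle_iff w2 by (simp add: divide_eq_eq)
  then have ang: "norm w = 1" "norm \<sigma> = 1" "\<not> same_angle w \<sigma>" using W_norm w \<sigma> by auto
  have "isect w \<sigma> 0 1 = w\<^sup>2 * (1 - \<sigma>\<^sup>2) / (w\<^sup>2 - \<sigma>\<^sup>2)"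
    unfolding isect_eq[OF ang] meet_def by simp
  also have "\<dots> = w\<^sup>2 * (1 - \<sigma>\<^sup>2) / (w\<^sup>2 * (1 - \<tau>\<^sup>2))"
    unfolding w2 using \<tau>0 by (simp add: field_simps)
  also have "\<dots> = g"
    unfolding g using \<sigma>0 \<tau>0 w2 by (simp add: mult_divide_mult_cancel_left)
  finally have g_isect: "isect w \<sigma> 0 1 = g" .
  show "g \<in> RU W"
    unfolding g_isect[symmetric] using ang(3) w \<sigma> by (blast intro: RU.intros)
  show "scaled_unit g"
    using isect_on_line[OF ang, of 0 1] w unfolding g_isect line_def scaled_unit_def by auto
qed

text \<open>-x = (1 - x) / (1 - 1/x) is a generator for every x \<noteq> 1 in V.\<close>
lemma minus_V_in_ratios:
  assumes x: "x \<in> V" and x1: "x \<noteq> 1"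
  shows "- x \<in> ratios W"
proof -
  have x0: "x \<noteq> 0" using V_unit[OF x] by auto
  have "inverse x \<noteq> 1" using x1 by (metis inverse_1 inverse_inverse_eq)
  then have "(1 - x) / (1 - inverse x) \<in> ratios W"
    using x V_inverse[OF x] unfolding ratios_def by blast
  moreover have "(1 - x) / (1 - inverse x) = - x"
    using x0 x1 by (simp add: field_simps)
  ultimately show ?thesis by simp
qed

lemma exists_V_square_ne_1:
  assumes "\<exists>u1\<in>W. \<exists>u2\<in>W. \<exists>u3\<in>W. \<not> same_angle u1 u2 \<and> \<not> same_angle u1 u3 \<and> \<not> same_angle u2 u3"
  shows "\<exists>b\<in>V. b \<noteq> 1 \<and> b\<^sup>2 \<noteq> 1"
proof -
  obtain u1 u2 u3 where u: "u1 \<in> W" "u2 \<in> W" "u3 \<in> W"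
    and ne: "u1\<^sup>2 \<noteq> u2\<^sup>2" "u1\<^sup>2 \<noteq> u3\<^sup>2" "u2\<^sup>2 \<noteq> u3\<^sup>2"
    using assms unfolding same_angle_iff by blast
  have "u1\<^sup>2 \<noteq> 0" using W_norm[OF u(1)] by auto
  define a2 a3 where "a2 = u2\<^sup>2 / u1\<^sup>2" and "a3 = u3\<^sup>2 / u1\<^sup>2"
  have V: "a2 \<in> V" "a3 \<in> V"
    unfolding a2_def a3_def using u W_mult W_inverse
    by (auto simp: power_mult_distrib[symmetric] power_inverse[symmetric] divide_inverse)
  have a: "a2 \<noteq> 1" "a3 \<noteq> 1" "a2 \<noteq> a3"
    using ne \<open>u1\<^sup>2 \<noteq> 0\<close> unfolding a2_def a3_def by (auto simp: divide_eq_eq)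
  show ?thesis
  proof (cases "a2\<^sup>2 = 1")
    case True
    then have "a2 = -1" using a(1) by (simp add: power2_eq_1_iff)
    then have "a3\<^sup>2 \<noteq> 1" using a by (auto simp: power2_eq_1_iff)
    then show ?thesis using V a by blast
  next
    case False
    then show ?thesis using V a by blast
  qed
qed

text \<open>-1 = (-b) (-b) (-b^-2) is a product of generators, hence lies in R(U).\<close>
lemma minus_one_in_RU:
  assumes "\<exists>u1\<in>W. \<exists>u2\<in>W. \<exists>u3\<in>W. \<not> same_angle u1 u2 \<and> \<not> same_angle u1 u3 \<and> \<not> same_angle u2 u3"
  shows "-1 \<in> RU W"
proof -
  obtain b where b: "b \<in> V" "b \<noteq> 1" "b\<^sup>2 \<noteq> 1"
    using exists_V_square_ne_1[OF assms] by blast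
  have b0: "b \<noteq> 0" using V_unit[OF b(1)] by auto
  have c: "inverse b * inverse b \<in> V" "inverse b * inverse b \<noteq> 1"
    using b b0 V_mult V_inverse by (auto simp: power2_eq_square field_simps)
  have mb: "- b \<in> RU W" "scaled_unit (- b)"
    using ratios_in_RU minus_V_in_ratios b by blast+
  have "- (inverse b * inverse b) \<in> RU W"
    using ratios_in_RU minus_V_in_ratios c by blast
  then have "(- b) * ((- b) * (- (inverse b * inverse b))) \<in> RU W"
    using RU_scale mb by blast
  moreover have "(- b) * ((- b) * (- (inverse b * inverse b))) = -1"
    using b0 by (simp add: field_simps)
  ultimately show ?thesis by simp
qed

lemma gen_ring_subset_RU:
  assumes "\<exists>u1\<in>W. \<exists>u2\<in>W. \<exists>u3\<in>W. \<not> same_angle u1 u2 \<and> \<not> same_angle u1 u3 \<and> \<not> same_angle u2 u3"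
  shows "gen_ring (ratios W) \<subseteq> RU W"
proof
  fix z assume "z \<in> gen_ring (ratios W)"
  then show "z \<in> RU W"
  proof (induction rule: gen_ring.induct)
    case (add x y)
    then show ?case using RU_add[OF minus_one_in_RU[OF assms]] by blast
  next
    case (uminus x)
    then show ?case using RU_uminus[OF minus_one_in_RU[OF assms]] by blast
  next
    case (mult_gen g x)
    then show ?case using RU_scale ratios_in_RU by blast
  qed (auto intro: RU.intros)
qed

text \<open>V lies in the generated ring, since -x is a generator for x \<noteq> 1.\<close>
lemma V_in_gen_ring:
  assumes x: "x \<in> V"
  shows "x \<in> gen_ring (ratios W)"
proof (cases "x = 1")
  case False
  then have "- x * 1 \<in> gen_ring (ratios W)"
    using minus_V_in_ratios[OF x] by (blast intro: gen_ring.intros)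
  then show ?thesis using gen_ring.uminus by fastforce
qed (simp add: gen_ring.one)

lemma scaled_unit_cnj:
  assumes "scaled_unit g"
  shows "\<exists>y\<in>V. cnj g = g * y"
proof -
  obtain r w where w: "w \<in> W" and g: "g = of_real r * w"
    using assms unfolding scaled_unit_def by blast
  have "cnj w = inverse w" using cnj_unit[OF W_norm[OF w]] by (metis inverse_unique mult.commute)
  then have "cnj g = g * (inverse w)\<^sup>2"
    unfolding g using W_norm[OF w] by (auto simp: power2_eq_square field_simps)
  moreover have "(inverse w)\<^sup>2 \<in> V" using W_inverse[OF w] by blast
  ultimately show ?thesis by blast
qed

text \<open>Induction on d; the
  multiplicative step uses scaled_unit_cnj to move a generator out of the conjugate.\<close>
lemma gen_ring_meet:
  assumes "d \<in> gen_ring (ratios W)" and "x \<in> V" and a: "a \<in> V" and b: "b \<in> V" and ab: "a \<noteq> b"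
  shows "(d - x * cnj d) / (a - b) \<in> gen_ring (ratios W)"
  using assms(1,2)
proof (induction d arbitrary: x rule: gen_ring.induct)
  case zero
  then show ?case by (simp add: gen_ring.zero)
next
  case one
  have a0: "a \<noteq> 0" using V_unit[OF a] by auto
  have "b * inverse a \<in> V" "b * inverse a \<noteq> 1"
    using V_mult[OF b V_inverse[OF a]] ab a0 by (auto simp: field_simps)
  then have "(1 - x) / (1 - b * inverse a) \<in> ratios W"
    using one.prems unfolding ratios_def by blast
  then have "(1 - x) / (1 - b * inverse a) * inverse a \<in> gen_ring (ratios W)"
    using V_in_gen_ring[OF V_inverse[OF a]] by (rule gen_ring.mult_gen)
  moreover have "(1 - x) / (1 - b * inverse a) * inverse a = (1 - x * cnj 1) / (a - b)"
    using a0 ab by (simp add: field_simps)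
  ultimately show ?case by simp
next
  case (add d1 d2)
  have "(d1 + d2 - x * cnj (d1 + d2)) / (a - b) = (d1 - x * cnj d1) / (a - b) + (d2 - x * cnj d2) / (a - b)"
    by (simp add: diff_divide_distrib add_divide_distrib algebra_simps)
  then show ?case using add by (simp add: gen_ring.add)
next
  case (uminus d)
  have "(- d - x * cnj (- d)) / (a - b) = - ((d - x * cnj d) / (a - b))"
    by (simp add: minus_divide_left)
  then show ?case using uminus by (simp add: gen_ring.uminus)
next
  case (mult_gen g d)
  obtain y where y: "y \<in> V" and cg: "cnj g = g * y"
    using scaled_unit_cnj ratios_in_RU(2)[OF mult_gen.hyps(1)] by blast
  have "g * d - x * cnj (g * d) = g * (d - (x * y) * cnj d)"
    by (simp add: cg algebra_simps)
  then have eq: "(g * d - x * cnj (g * d)) / (a - b) = g * ((d - (x * y) * cnj d) / (a - b))"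
    by simp
  have "(d - (x * y) * cnj d) / (a - b) \<in> gen_ring (ratios W)"
    using mult_gen.IH V_mult[OF mult_gen.prems y] .
  then show ?case unfolding eq by (rule gen_ring.mult_gen[OF mult_gen.hyps(1)])
qed

lemma RU_subset_gen_ring: "RU W \<subseteq> gen_ring (ratios W)"
proof
  fix z assume "z \<in> RU W"
  then show "z \<in> gen_ring (ratios W)"
  proof (induction rule: RU.induct)
    case (isect p q u v)
    have uv: "u\<^sup>2 \<noteq> v\<^sup>2" using isect.hyps(5) by (simp add: same_angle_iff)
    have "q - p \<in> gen_ring (ratios W)"
      using isect.IH by (metis diff_conv_add_uminus gen_ring.add gen_ring.uminus)
    then have "((q - p) - v\<^sup>2 * cnj (q - p)) / (u\<^sup>2 - v\<^sup>2) \<in> gen_ring (ratios W)"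
      using gen_ring_meet uv isect.hyps(3,4) by blast
    then have "p + u\<^sup>2 * (((q - p) - v\<^sup>2 * cnj (q - p)) / (u\<^sup>2 - v\<^sup>2)) \<in> gen_ring (ratios W)"
      using isect.IH(1) V_in_gen_ring isect.hyps(3) by (blast intro: gen_ring.add gen_ring_mult)
    then show ?case
      using isect_eq W_norm isect.hyps by (simp add: meet_def)
  qed (auto intro: gen_ring.intros)
qed

end

theorem theorem1:
  fixes W :: "complex set"
  assumes "angle_subgroup W"
    and "\<exists>u1\<in>W. \<exists>u2\<in>W. \<exists>u3\<in>W. \<not> same_angle u1 u2 \<and> \<not> same_angle u1 u3 \<and> \<not> same_angle u2 u3"
  shows "is_subring (RU W) \<and>
         RU W = int_comb_prods {(1 - u\<^sup>2) / (1 - v\<^sup>2) | u v. u \<in> W \<and> v \<in> W \<and> v\<^sup>2 \<noteq> 1} \<and>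
         RU W = int_comb_prods {(1 - a) / (1 - b) | a b. a \<in> (\<lambda>u. u\<^sup>2) ` W \<and> b \<in> (\<lambda>u. u\<^sup>2) ` W \<and> b \<noteq> 1}"
proof -
  have RU_eq: "RU W = gen_ring (ratios W)"
    using RU_subset_gen_ring[OF assms(1)] gen_ring_subset_RU[OF assms] by blast
  have "{(1 - u\<^sup>2) / (1 - v\<^sup>2) | u v. u \<in> W \<and> v \<in> W \<and> v\<^sup>2 \<noteq> 1} = ratios W"
    unfolding ratios_def by blast
  then show ?thesis
    unfolding int_comb_prods_eq_gen_ring RU_eq ratios_def[symmetric] using gen_ring_is_subring by simp
qed

end
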